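(* Let $T$ be a primed tableau of shape $\lambda/\mu$ over $X'_k$, $1\le i\le k-1$, $j=i+1$, with $f_i(T)\ne 0$, and let $x,q$ be the boxes chosen in the definition of $f_i$. Then either $q=x$ and $f_i(T)$ is obtained from $T$ by replacing the entry $i$ in $x$ by $j$, or $q\ne x$ and $f_i(T)$ is obtained by replacing the $i$ in $x$ by $j'$ and a $j'$ in $q$ by $j$. Moreover, $f_i(T)$ is again a primed tableau of shape $\lambda/\mu$.
   Context: Primed tableaux: Fix $k$. $X'_k=\{1'<1<2'<2<\dots<k'<k\}$; moving one step up in this chain is "increasing by a half unit" (e.g. $i'\to i$, $i\to (i+1)'$). A primed tableau of (skew) shape $\lambda/\mu$ is a filling of the diagram (English convention; "below" = next row down) with letters of $X'_k$, rows and columns weakly increasing, at most one $i'$ per row and at most one $i$ per column, for every $i$. For a position $p$, $c(p)$ is its entry, with $c(p)=\infty$ if $p$ is not a box of $T$. The reading word of $T$ is the word of its unprimed entries, read row by row left to right, from the bottom row to the top row. Bracketing: fix $i$, $j=i+1$. In the subword of the reading word consisting of the letters $i$ and $j$, repeatedly pair (bracket) a letter $j$ with a letter $i$ occurring later such that no unbracketed letters lie between them, until the unbracketed letters form a word $i^aj^b$. Operator $f_i$: if there is no unbracketed $i$, $f_i(T)=0$. Otherwise let $x$ be the box of $T$ corresponding to the rightmost unbracketed $i$; $E_x$ the position immediately right of $x$, $S_x$ the position immediately below $x$. Choose a box $q$: (F1) if $c(E_x)\ge j$ and $c(S_x)>j$, $q=x$; (F2) if $c(E_x)=j'$, $q=E_x$;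 (F3) if $c(E_x)\ge j$ and $c(S_x)\in\{j',j\}$, take the maximal ribbon (connected skew strip) starting at $S_x$ and extending by steps South and/or West consisting only of boxes with entries $j$ or $j'$, and let $q$ be its Southwest-most box. Then $f_i(T)$ is obtained from $T$ by increasing $c(x)$ by a half unit and then increasing $c(q)$ by a half unit (so if $q=x$ the entry of $x$ increases by a full unit). *)

theory Defs
  imports Main "HOL-Library.Extended_Nat"
begin

(* Encoding of the alphabet X'_k: the letter i' is coded as 2*i - 1 and the
   letter i as 2*i (i = 1..k).  Thus "increasing by a half unit" is +1.
   A tableau is a function T :: nat*nat => nat (row, column), rows indexed
   from 0 top to bottom (English convention), columns from 0 left to right;
   T p = 0 means that p is not a box of T. *)

type_synonym pos = "nat \<times> nat"
type_synonym ptab = "pos \<Rightarrow> nat"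

definition unpr :: "nat \<Rightarrow> nat" where "unpr i = 2 * i"
definition pr :: "nat \<Rightarrow> nat" where "pr i = 2 * i - 1"

definition cval :: "ptab \<Rightarrow> pos \<Rightarrow> enat" where
  "cval T p = (if T p = 0 then \<infinity> else enat (T p))"

definition is_partition :: "nat list \<Rightarrow> bool" where
  "is_partition lam \<longleftrightarrow> sorted_wrt (\<ge>) lam"

definition part_contained :: "nat list \<Rightarrow> nat list \<Rightarrow> bool" where
  "part_contained mu lam \<longleftrightarrow> length mu \<le> length lam \<and> (\<forall>r < length mu. mu ! r \<le> lam ! r)"

definition skew_diagram :: "nat list \<Rightarrow> nat list \<Rightarrow> pos set" where
  "skew_diagram lam mu = {(r, c). r < length lam \<and>
      (if r < length mu then mu ! r else 0) \<le> c \<and> c < lam ! r}"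

definition primed_tableau :: "nat \<Rightarrow> nat list \<Rightarrow> nat list \<Rightarrow> ptab \<Rightarrow> bool" where
  "primed_tableau k lam mu T \<longleftrightarrow>
     is_partition lam \<and> is_partition mu \<and> part_contained mu lam \<and>
     {p. T p \<noteq> 0} = skew_diagram lam mu \<and>
     (\<forall>p. T p \<noteq> 0 \<longrightarrow> T p \<le> 2 * k) \<and>
     (\<forall>r c c'. T (r, c) \<noteq> 0 \<and> T (r, c') \<noteq> 0 \<and> c \<le> c' \<longrightarrow> T (r, c) \<le> T (r, c')) \<and>
     (\<forall>r r' c. T (r, c) \<noteq> 0 \<and> T (r', c) \<noteq> 0 \<and> r \<le> r' \<longrightarrow> T (r, c) \<le> T (r', c)) \<and>
     (\<forall>r c c'. T (r, c) \<noteq> 0 \<and> odd (T (r, c)) \<and> c \<noteq> c' \<longrightarrow> T (r, c') \<noteq> T (r, c)) \<and>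
     (\<forall>r r' c. T (r, c) \<noteq> 0 \<and> even (T (r, c)) \<and> r \<noteq> r' \<longrightarrow> T (r', c) \<noteq> T (r, c))"

definition bnd :: "ptab \<Rightarrow> nat" where
  "bnd T = Suc (Max (insert 0 (fst ` {p. T p \<noteq> 0} \<union> snd ` {p. T p \<noteq> 0})))"

definition reading_boxes :: "ptab \<Rightarrow> pos list" where
  "reading_boxes T = filter (\<lambda>p. T p \<noteq> 0 \<and> even (T p))
     (concat (map (\<lambda>r. map (\<lambda>c. (r, c)) [0..<bnd T]) (rev [0..<bnd T])))"

definition reading_word :: "ptab \<Rightarrow> nat list" where
  "reading_word T = map (\<lambda>p. T p div 2) (reading_boxes T)"

(* bracketing: scanning left to right, n = number of currently unbracketed j's;
   a letter i is bracketed with a pending j if there is one, otherwise it stays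
   unbracketed. *)
fun unbr_i :: "nat \<Rightarrow> ptab \<Rightarrow> nat \<Rightarrow> pos list \<Rightarrow> pos list" where
  "unbr_i i T n [] = []"
| "unbr_i i T n (p # ps) =
     (if T p = unpr (i + 1) then unbr_i i T (Suc n) ps
      else if T p = unpr i then
        (if n > 0 then unbr_i i T (n - 1) ps else p # unbr_i i T 0 ps)
      else unbr_i i T n ps)"

definition unbracketed_i :: "nat \<Rightarrow> ptab \<Rightarrow> pos list" where
  "unbracketed_i i T = unbr_i i T 0 (reading_boxes T)"

definition fx :: "nat \<Rightarrow> ptab \<Rightarrow> pos" where
  "fx i T = last (unbracketed_i i T)"

definition rstep :: "ptab \<Rightarrow> nat \<Rightarrow> (pos \<times> pos) set" where
  "rstep T i = {(p, p'). (p' = (Suc (fst p), snd p) \<or> (0 < snd p \<and> p' = (fst p, snd p - 1)))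
                   \<and> T p' \<in> {pr (i + 1), unpr (i + 1)}}"

definition ribbon_end :: "ptab \<Rightarrow> nat \<Rightarrow> pos \<Rightarrow> pos" where
  "ribbon_end T i s = (THE q. (s, q) \<in> (rstep T i)\<^sup>* \<and> (\<forall>q'. (q, q') \<notin> rstep T i))"

definition fq :: "nat \<Rightarrow> ptab \<Rightarrow> pos" where
  "fq i T = (let x = fx i T; E = (fst x, Suc (snd x)); S = (Suc (fst x), snd x); j = i + 1 in
     if cval T E \<ge> enat (unpr j) \<and> cval T S > enat (unpr j) then x
     else if cval T E = enat (pr j) then E
     else if cval T E \<ge> enat (unpr j) \<and> cval T S \<in> {enat (pr j), enat (unpr j)} then ribbon_end T i S
     else undefined)"

(* f_i; None represents 0 *)
definition f_op :: "nat \<Rightarrow> ptab \<Rightarrow> ptab option" where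
  "f_op i T = (if unbracketed_i i T = [] then None
     else (let x = fx i T; q = fq i T; T1 = T(x := T x + 1) in Some (T1(q := T1 q + 1))))"

end

theory Submission
  imports Defs
begin

text \<open>
  Let \<open>x = (r, c)\<close> carry the rightmost unbracketed \<open>i\<close>. As \<open>x\<close> is unbracketed, every \<open>j\<close> read
  before it (in the rows below \<open>r\<close>, and left of \<open>c\<close> in row \<open>r\<close>) is bracketed by an \<open>i\<close> read before it;
  as it is the rightmost one, its east neighbour is not \<open>i\<close>. The ribbon from \<open>S_x\<close> moves South out of
  a \<open>j'\<close> and West out of a \<open>j\<close>, and counting letters along it shows that a \<open>j\<close> at its end, or a \<open>j\<close> in
  row \<open>r + 1\<close> right of column \<open>c\<close>, would stay unbracketed when \<open>x\<close> is read. Hence \<open>q\<close> holds \<open>j'\<close>, and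
  in case F2 the box south-east of \<open>x\<close> is not \<open>j\<close>. With these facts, each single-box change is checked
  against the row and column conditions, in an order that keeps every intermediate filling a tableau.
\<close>

lemma primed_tableau_row_mono:
  "primed_tableau k lam mu T \<Longrightarrow> T (r, c) \<noteq> 0 \<Longrightarrow> T (r, c') \<noteq> 0 \<Longrightarrow> c \<le> c' \<Longrightarrow>
    T (r, c) \<le> T (r, c')"
  unfolding primed_tableau_def by blast

lemma primed_tableau_col_mono:
  "primed_tableau k lam mu T \<Longrightarrow> T (r, c) \<noteq> 0 \<Longrightarrow> T (r', c) \<noteq> 0 \<Longrightarrow> r \<le> r' \<Longrightarrow>
    T (r, c) \<le> T (r', c)"
  unfolding primed_tableau_def by blast

lemma primed_tableau_primed_row_unique:
  "primed_tableau k lam mu T \<Longrightarrow> T (r, c) \<noteq> 0 \<Longrightarrow> odd (T (r, c)) \<Longrightarrow> c \<noteq> c' \<Longrightarrow>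
    T (r, c') \<noteq> T (r, c)"
  unfolding primed_tableau_def by blast

lemma primed_tableau_unprimed_col_unique:
  "primed_tableau k lam mu T \<Longrightarrow> T (r, c) \<noteq> 0 \<Longrightarrow> even (T (r, c)) \<Longrightarrow> r \<noteq> r' \<Longrightarrow>
    T (r', c) \<noteq> T (r, c)"
  unfolding primed_tableau_def by blast

lemma sorted_wrt_ge_nth_antimono:
  "sorted_wrt (\<ge>) (xs :: nat list) \<Longrightarrow> a \<le> b \<Longrightarrow> b < length xs \<Longrightarrow> xs ! b \<le> xs ! a"
  by (cases "a = b") (auto simp: sorted_wrt_iff_nth_less)

lemma primed_tableau_box_between:
  assumes pt: "primed_tableau k lam mu T" and "T (r1, c1) \<noteq> 0" "T (r2, c2) \<noteq> 0"
    and "r1 \<le> r" "r \<le> r2" "c1 \<le> c" "c \<le> c2"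
  shows "T (r, c) \<noteq> 0"
proof -
  from pt have boxes: "{p. T p \<noteq> 0} = skew_diagram lam mu"
    and lam: "sorted_wrt (\<ge>) lam" and mu: "sorted_wrt (\<ge>) mu"
    unfolding primed_tableau_def is_partition_def by auto
  have in_diagram: "(r1, c1) \<in> skew_diagram lam mu" "(r2, c2) \<in> skew_diagram lam mu"
    using boxes assms(2,3) by auto
  let ?m = "\<lambda>r. if r < length mu then mu ! r else 0"
  have "?m r \<le> ?m r1"
    using sorted_wrt_ge_nth_antimono[OF mu \<open>r1 \<le> r\<close>] \<open>r1 \<le> r\<close> by auto
  moreover have "lam ! r2 \<le> lam ! r"
    using sorted_wrt_ge_nth_antimono[OF lam \<open>r \<le> r2\<close>] in_diagram by (auto simp: skew_diagram_def)
  ultimately have "(r, c) \<in> skew_diagram lam mu"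
    using in_diagram assms(4-7) by (auto simp: skew_diagram_def split: if_splits)
  then show ?thesis using boxes by auto
qed

lemma primed_tableau_finite_boxes:
  assumes "primed_tableau k lam mu T"
  shows "finite {p. T p \<noteq> 0}"
proof -
  have "{p. T p \<noteq> 0} = skew_diagram lam mu" using assms unfolding primed_tableau_def by auto
  also have "\<dots> \<subseteq> {..<length lam} \<times> {..<sum_list lam}"
    using elem_le_sum_list by (fastforce simp: skew_diagram_def)
  finally show ?thesis by (rule finite_subset) auto
qed

lemma primed_tableau_bnd:
  assumes "primed_tableau k lam mu T" "T p \<noteq> 0"
  shows "fst p < bnd T" "snd p < bnd T"
proof -
  have "finite (insert 0 (fst ` {p. T p \<noteq> 0} \<union> snd ` {p. T p \<noteq> 0}))"
    using primed_tableau_finite_boxes[OF assms(1)] by auto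
  then show "fst p < bnd T" "snd p < bnd T"
    unfolding bnd_def using Max_ge assms(2) by (fastforce intro: le_imp_less_Suc)+
qed

lemma primed_tableau_fun_upd:
  assumes pt: "primed_tableau k lam mu T" and box: "T (r, c) \<noteq> 0"
    and v: "v \<noteq> 0" "v \<le> 2 * k"
    and left: "\<And>c'. T (r, c') \<noteq> 0 \<Longrightarrow> c' < c \<Longrightarrow> T (r, c') \<le> v"
    and right: "\<And>c'. T (r, c') \<noteq> 0 \<Longrightarrow> c < c' \<Longrightarrow> v \<le> T (r, c')"
    and above: "\<And>r'. T (r', c) \<noteq> 0 \<Longrightarrow> r' < r \<Longrightarrow> T (r', c) \<le> v"
    and below: "\<And>r'. T (r', c) \<noteq> 0 \<Longrightarrow> r < r' \<Longrightarrow> v \<le> T (r', c)"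
    and primed: "\<And>c'. odd v \<Longrightarrow> c' \<noteq> c \<Longrightarrow> T (r, c') \<noteq> 0 \<Longrightarrow> T (r, c') \<noteq> v"
    and unprimed: "\<And>r'. even v \<Longrightarrow> r' \<noteq> r \<Longrightarrow> T (r', c) \<noteq> 0 \<Longrightarrow> T (r', c) \<noteq> v"
  shows "primed_tableau k lam mu (T((r, c) := v))"
proof -
  let ?T = "T((r, c) := v)"
  have boxes: "{p. ?T p \<noteq> 0} = {p. T p \<noteq> 0}" using box v by auto
  have bound: "\<forall>p. ?T p \<noteq> 0 \<longrightarrow> ?T p \<le> 2 * k" using pt v unfolding primed_tableau_def by auto
  have rows: "?T (r0, c1) \<le> ?T (r0, c2)"
    if "?T (r0, c1) \<noteq> 0" "?T (r0, c2) \<noteq> 0" "c1 \<le> c2" for r0 c1 c2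
    using that primed_tableau_row_mono[OF pt, of r0 c1 c2] left[of c1] right[of c2]
    by (cases "(r0, c1) = (r, c)"; cases "(r0, c2) = (r, c)") auto
  have cols: "?T (r1, c0) \<le> ?T (r2, c0)"
    if "?T (r1, c0) \<noteq> 0" "?T (r2, c0) \<noteq> 0" "r1 \<le> r2" for r1 r2 c0
    using that primed_tableau_col_mono[OF pt, of r1 c0 r2] above[of r1] below[of r2]
    by (cases "(r1, c0) = (r, c)"; cases "(r2, c0) = (r, c)") auto
  have primed_rows: "?T (r0, c2) \<noteq> ?T (r0, c1)"
    if "?T (r0, c1) \<noteq> 0" "odd (?T (r0, c1))" "c1 \<noteq> c2" for r0 c1 c2
    using that primed_tableau_primed_row_unique[OF pt, of r0 c1 c2] primed[of c2] primed[of c1] v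
    by (cases "(r0, c1) = (r, c)"; cases "(r0, c2) = (r, c)") auto
  have unprimed_cols: "?T (r2, c0) \<noteq> ?T (r1, c0)"
    if "?T (r1, c0) \<noteq> 0" "even (?T (r1, c0))" "r1 \<noteq> r2" for r1 r2 c0
    using that primed_tableau_unprimed_col_unique[OF pt, of r1 c0 r2] unprimed[of r2] unprimed[of r1] v
    by (cases "(r1, c0) = (r, c)"; cases "(r2, c0) = (r, c)") auto
  show ?thesis
    using pt boxes bound rows cols primed_rows unprimed_cols unfolding primed_tableau_def by simp
qed

definition ribbon_box :: "ptab \<Rightarrow> nat \<Rightarrow> pos \<Rightarrow> bool" where
  "ribbon_box T i p \<longleftrightarrow> T p = pr (i + 1) \<or> T p = unpr (i + 1)"

lemma rstep_iff:
  "(p, p') \<in> rstep T i \<longleftrightarrow>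
    (p' = (Suc (fst p), snd p) \<or> (0 < snd p \<and> p' = (fst p, snd p - 1))) \<and> ribbon_box T i p'"
  by (simp add: rstep_def ribbon_box_def)

lemma ribbon_box_nonzero: "ribbon_box T i p \<Longrightarrow> T p \<noteq> 0"
  by (auto simp: ribbon_box_def pr_def unpr_def)

lemma rstep_from_primed_south:
  assumes pt: "primed_tableau k lam mu T" and "T (r, c) = pr (i + 1)" and "((r, c), p') \<in> rstep T i"
  shows "p' = (Suc r, c)"
proof (rule ccontr)
  assume "p' \<noteq> (Suc r, c)"
  with assms(3) have west: "0 < c" "p' = (r, c - 1)" and "ribbon_box T i (r, c - 1)"
    by (auto simp: rstep_iff)
  then have boxes: "T (r, c - 1) \<noteq> 0" "T (r, c) \<noteq> 0"
    using ribbon_box_nonzero assms(2) by (auto simp: pr_def)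
  have "T (r, c - 1) \<le> T (r, c)" using primed_tableau_row_mono[OF pt boxes] by simp
  moreover have "T (r, c - 1) \<noteq> T (r, c)"
    using primed_tableau_primed_row_unique[OF pt boxes(2), of "c - 1"] assms(2) west
    by (auto simp: pr_def)
  ultimately show False
    using \<open>ribbon_box T i (r, c - 1)\<close> assms(2) by (auto simp: ribbon_box_def pr_def unpr_def)
qed

lemma rstep_from_unprimed_west:
  assumes pt: "primed_tableau k lam mu T" and "T (r, c) = unpr (i + 1)" and "((r, c), p') \<in> rstep T i"
  shows "0 < c \<and> p' = (r, c - 1)"
proof (rule ccontr)
  assume "\<not> (0 < c \<and> p' = (r, c - 1))"
  with assms(3) have south: "p' = (Suc r, c)" and "ribbon_box T i (Suc r, c)"
    by (auto simp: rstep_iff)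
  then have boxes: "T (r, c) \<noteq> 0" "T (Suc r, c) \<noteq> 0"
    using ribbon_box_nonzero assms(2) by (auto simp: unpr_def)
  have "T (r, c) \<le> T (Suc r, c)" using primed_tableau_col_mono[OF pt boxes] by simp
  moreover have "T (Suc r, c) \<noteq> T (r, c)"
    using primed_tableau_unprimed_col_unique[OF pt boxes(1), of "Suc r"] assms(2)
    by (auto simp: unpr_def)
  ultimately show False
    using \<open>ribbon_box T i (Suc r, c)\<close> assms(2) by (auto simp: ribbon_box_def pr_def unpr_def)
qed

lemma rstep_deterministic:
  assumes pt: "primed_tableau k lam mu T" and "ribbon_box T i p"
    and "(p, p1) \<in> rstep T i" "(p, p2) \<in> rstep T i"
  shows "p1 = p2"
proof -
  obtain r c where p: "p = (r, c)" by fastforce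
  show ?thesis
  proof (cases "T p = pr (i + 1)")
    case True
    then show ?thesis
      using rstep_from_primed_south[OF pt] assms(3,4) unfolding p by blast
  next
    case False
    then have "T p = unpr (i + 1)" using assms(2) by (simp add: ribbon_box_def)
    then show ?thesis
      using rstep_from_unprimed_west[OF pt] assms(3,4) unfolding p by blast
  qed
qed

lemma rstep_rtrancl_row_mono: "(p, q) \<in> (rstep T i)\<^sup>* \<Longrightarrow> fst p \<le> fst q"
  by (induction rule: rtrancl_induct) (auto simp: rstep_iff)

lemma rstep_rtrancl_ribbon_box: "(p, q) \<in> (rstep T i)\<^sup>* \<Longrightarrow> ribbon_box T i p \<Longrightarrow> ribbon_box T i q"
  by (induction rule: rtrancl_induct) (auto simp: rstep_iff)

lemma ribbon_terminal_exists:
  assumes pt: "primed_tableau k lam mu T"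
  shows "\<exists>q. (p, q) \<in> (rstep T i)\<^sup>* \<and> (\<forall>q'. (q, q') \<notin> rstep T i)"
proof (induction p rule: measure_induct_rule[of "\<lambda>p. (bnd T - fst p) + snd p"])
  case (less p)
  show ?case
  proof (cases "\<exists>p'. (p, p') \<in> rstep T i")
    case True
    then obtain p' where step: "(p, p') \<in> rstep T i" by blast
    then have "ribbon_box T i p'" by (simp add: rstep_iff)
    then have "fst p' < bnd T" using primed_tableau_bnd[OF pt] ribbon_box_nonzero by blast
    with step have "(bnd T - fst p') + snd p' < (bnd T - fst p) + snd p"
      by (auto simp: rstep_iff)
    with less obtain q where "(p', q) \<in> (rstep T i)\<^sup>*" "\<forall>q'. (q, q') \<notin> rstep T i"
      by blast
    with step show ?thesis using converse_rtrancl_into_rtrancl by metis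
  qed blast
qed

lemma ribbon_terminal_unique:
  assumes pt: "primed_tableau k lam mu T"
    and "(p, q1) \<in> (rstep T i)\<^sup>*" "\<forall>q'. (q1, q') \<notin> rstep T i"
    and "(p, q2) \<in> (rstep T i)\<^sup>*" "\<forall>q'. (q2, q') \<notin> rstep T i"
    and "ribbon_box T i p"
  shows "q1 = q2"
  using assms(2,4,6)
proof (induction p rule: converse_rtrancl_induct)
  case base
  then show ?case using assms(3) by (auto elim: converse_rtranclE)
next
  case (step y z)
  from \<open>(y, q2) \<in> (rstep T i)\<^sup>*\<close> show ?case
  proof (cases rule: converse_rtranclE)
    case base
    then show ?thesis using assms(5) step.hyps(1) by blast
  next
    case (step z')
    with rstep_deterministic[OF pt] have "z' = z" using step.hyps(1) \<open>ribbon_box T i y\<close> by blast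
    moreover have "ribbon_box T i z" using step.hyps(1) by (simp add: rstep_iff)
    ultimately show ?thesis using step.IH step(2) by blast
  qed
qed

lemma ribbon_end_eq:
  assumes pt: "primed_tableau k lam mu T" and "ribbon_box T i s"
    and "(s, q) \<in> (rstep T i)\<^sup>*" "\<forall>q'. (q, q') \<notin> rstep T i"
  shows "ribbon_end T i s = q"
  unfolding ribbon_end_def
proof (rule the_equality)
  show "(s, q) \<in> (rstep T i)\<^sup>* \<and> (\<forall>q'. (q, q') \<notin> rstep T i)" using assms(3,4) by blast
  fix q2 assume "(s, q2) \<in> (rstep T i)\<^sup>* \<and> (\<forall>q'. (q2, q') \<notin> rstep T i)"
  then show "q2 = q" using ribbon_terminal_unique[OF pt assms(3,4) _ _ assms(2)] by blast
qed

definition pending_j_step :: "nat \<Rightarrow> ptab \<Rightarrow> nat \<Rightarrow> pos \<Rightarrow> nat" where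
  "pending_j_step i T n p =
     (if T p = unpr (i + 1) then Suc n else if T p = unpr i then n - 1 else n)"

definition pending_j :: "nat \<Rightarrow> ptab \<Rightarrow> nat \<Rightarrow> pos list \<Rightarrow> nat" where
  "pending_j i T n ps = foldl (pending_j_step i T) n ps"

definition count_i :: "nat \<Rightarrow> ptab \<Rightarrow> pos list \<Rightarrow> nat" where
  "count_i i T ps = length (filter (\<lambda>p. T p = unpr i) ps)"

definition count_j :: "nat \<Rightarrow> ptab \<Rightarrow> pos list \<Rightarrow> nat" where
  "count_j i T ps = length (filter (\<lambda>p. T p = unpr (i + 1)) ps)"

definition row_boxes :: "nat \<Rightarrow> nat list \<Rightarrow> pos list" where
  "row_boxes r cs = map (\<lambda>c. (r, c)) cs"

definition rows_from :: "nat \<Rightarrow> nat \<Rightarrow> pos list" where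
  "rows_from B \<rho> = concat (map (\<lambda>r. row_boxes r [0..<B]) (rev [\<rho>..<B]))"

definition pending_j_below :: "nat \<Rightarrow> ptab \<Rightarrow> nat \<Rightarrow> nat \<Rightarrow> nat" where
  "pending_j_below i T B \<rho> = pending_j i T 0 (rows_from B \<rho>)"

lemma unbr_i_filter:
  assumes "\<forall>p. T p = unpr i \<or> T p = unpr (i + 1) \<longrightarrow> P p"
  shows "unbr_i i T n (filter P ps) = unbr_i i T n ps"
  using assms by (induction ps arbitrary: n) auto

lemma unbr_i_append:
  "unbr_i i T n (ps @ qs) = unbr_i i T n ps @ unbr_i i T (pending_j i T n ps) qs"
  by (induction ps arbitrary: n) (auto simp: pending_j_def pending_j_step_def)

lemma unbr_i_subset: "set (unbr_i i T n ps) \<subseteq> {p \<in> set ps. T p = unpr i}"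
  by (induction ps arbitrary: n) (auto simp: unpr_def)

lemma pending_j_append: "pending_j i T n (ps @ qs) = pending_j i T (pending_j i T n ps) qs"
  by (simp add: pending_j_def)

lemma pending_j_lower_bound: "n + count_j i T ps \<le> pending_j i T n ps + count_i i T ps"
proof (induction ps arbitrary: n)
  case Nil
  then show ?case by (simp add: pending_j_def count_i_def count_j_def)
next
  case (Cons p ps)
  show ?case using Cons.IH[of "Suc n"] Cons.IH[of "n - 1"] Cons.IH[of n]
    by (auto simp: pending_j_def pending_j_step_def count_i_def count_j_def unpr_def)
qed

lemma count_i_append: "count_i i T (ps @ qs) = count_i i T ps + count_i i T qs"
  by (simp add: count_i_def)

lemma count_j_append: "count_j i T (ps @ qs) = count_j i T ps + count_j i T qs"
  by (simp add: count_j_def)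

lemma count_i_eq_0_iff: "count_i i T ps = 0 \<longleftrightarrow> (\<forall>p\<in>set ps. T p \<noteq> unpr i)"
  by (simp add: count_i_def filter_empty_conv)

lemma count_j_Cons: "count_j i T (p # ps) = (if T p = unpr (i + 1) then 1 else 0) + count_j i T ps"
  by (simp add: count_j_def)

lemma count_i_snoc_le: "count_i i T (ps @ [p]) \<le> count_i i T ps + 1"
  by (simp add: count_i_def)

lemma row_boxes_upt_split: "a \<le> b \<Longrightarrow> b \<le> n \<Longrightarrow> row_boxes r [a..<n] = row_boxes r [a..<b] @ row_boxes r [b..<n]"
  using upt_add_eq_append[of a b "n - b"] by (simp add: row_boxes_def)

lemma row_boxes_upt_Cons: "a < n \<Longrightarrow> row_boxes r [a..<n] = (r, a) # row_boxes r [Suc a..<n]"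
  by (simp add: row_boxes_def upt_conv_Cons)

lemma rows_from_Suc: "\<rho> < B \<Longrightarrow> rows_from B \<rho> = rows_from B (Suc \<rho>) @ row_boxes \<rho> [0..<B]"
  by (simp add: rows_from_def upt_conv_Cons)

lemma pending_j_below_Suc:
  "\<rho> < B \<Longrightarrow> pending_j_below i T B \<rho> = pending_j i T (pending_j_below i T B (Suc \<rho>)) (row_boxes \<rho> [0..<B])"
  by (simp add: pending_j_below_def rows_from_Suc pending_j_append)

lemma unbracketed_i_rows_from: "1 \<le> i \<Longrightarrow> unbracketed_i i T = unbr_i i T 0 (rows_from (bnd T) 0)"
  unfolding unbracketed_i_def reading_boxes_def rows_from_def row_boxes_def
  by (rule unbr_i_filter) (auto simp: unpr_def)

lemma count_i_right_of_larger:
  assumes pt: "primed_tableau k lam mu T" and "1 \<le> i" and "T (a, w) \<noteq> 0" "unpr i < T (a, w)"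
  shows "count_i i T (row_boxes a [w..<B]) = 0"
  unfolding count_i_eq_0_iff row_boxes_def
proof (intro ballI notI)
  fix p assume "p \<in> set (map (\<lambda>c. (a, c)) [w..<B])" "T p = unpr i"
  then obtain g where g: "w \<le> g" "T (a, g) = unpr i" by auto
  then have "T (a, w) \<le> T (a, g)"
    using primed_tableau_row_mono[OF pt assms(3), of g] \<open>1 \<le> i\<close> by (simp add: unpr_def)
  then show False using assms(4) g(2) by simp
qed

lemma entry_below_i_gt:
  assumes pt: "primed_tableau k lam mu T" and "1 \<le> i"
    and "T (a, g) = unpr i" "T (Suc a, w) \<noteq> 0" "g \<le> w"
  shows "T (Suc a, g) \<noteq> 0" "unpr i < T (Suc a, g)"
proof -
  have above: "T (a, g) \<noteq> 0" using assms(2,3) by (simp add: unpr_def)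
  then show below: "T (Suc a, g) \<noteq> 0"
    using primed_tableau_box_between[OF pt _ assms(4), of a g "Suc a" g] assms(5) by simp
  have "T (a, g) \<le> T (Suc a, g)" using primed_tableau_col_mono[OF pt above below] by simp
  moreover have "T (Suc a, g) \<noteq> T (a, g)"
    using primed_tableau_unprimed_col_unique[OF pt above, of "Suc a"] assms(3) by (simp add: unpr_def)
  ultimately show "unpr i < T (Suc a, g)" using assms(3) by simp
qed

text \<open>
  The ribbon invariant: after reading the rows from the bottom up to the row of a ribbon box
  \<open>(Suc a, b)\<close>, the \<open>j\<close>'s right of that box in its row and a \<open>j\<close> at the end of the ribbon are still
  unbracketed, apart from as many as there are \<open>i\<close>'s in row \<open>a\<close> left of column \<open>b\<close>.\<close>

lemma ribbon_count_end:
  assumes pt: "primed_tableau k lam mu T" and "1 \<le> i"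
    and q: "ribbon_box T i (Suc a, w)" and terminal: "\<forall>q'. ((Suc a, w), q') \<notin> rstep T i"
  shows "(if T (Suc a, w) = unpr (i + 1) then 1 else 0) + count_i i T (row_boxes a [0..<w])
    + count_j i T (row_boxes (Suc a) [Suc w..<bnd T]) \<le> pending_j_below i T (bnd T) (Suc a)"
proof -
  let ?B = "bnd T"
  have box: "T (Suc a, w) \<noteq> 0" using ribbon_box_nonzero[OF q] .
  have bounds: "Suc a < ?B" "w < ?B" using primed_tableau_bnd[OF pt box] by auto
  have larger: "unpr i < T (Suc a, w)" using q by (auto simp: ribbon_box_def pr_def unpr_def)
  have left: "count_i i T (row_boxes a [0..<w]) = 0"
    unfolding count_i_eq_0_iff row_boxes_def
  proof (intro ballI notI)
    fix p assume "p \<in> set (map (\<lambda>c. (a, c)) [0..<w])" "T p = unpr i"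
    then obtain g where g: "g < w" "T (a, g) = unpr i" by auto
    have g_box: "T (Suc a, g) \<noteq> 0" "unpr i < T (Suc a, g)"
      using entry_below_i_gt[OF pt \<open>1 \<le> i\<close> g(2) box] g(1) by auto
    have west_box: "T (Suc a, w - 1) \<noteq> 0"
      using primed_tableau_box_between[OF pt g_box(1) box, of "Suc a" "w - 1"] g(1) by simp
    have "T (Suc a, g) \<le> T (Suc a, w - 1)" "T (Suc a, w - 1) \<le> T (Suc a, w)"
      using primed_tableau_row_mono[OF pt g_box(1) west_box] primed_tableau_row_mono[OF pt west_box box]
        g(1) by auto
    moreover have "\<not> ribbon_box T i (Suc a, w - 1)" using terminal g(1) by (auto simp: rstep_iff)
    ultimately show False using q g_box(2) by (auto simp: ribbon_box_def pr_def unpr_def)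
  qed
  define n where "n = pending_j i T (pending_j_below i T ?B (Suc (Suc a))) (row_boxes (Suc a) [0..<w])"
  have "pending_j_below i T ?B (Suc a) = pending_j i T n (row_boxes (Suc a) [w..<?B])"
    using pending_j_below_Suc[OF bounds(1)] row_boxes_upt_split[of 0 w ?B] bounds(2)
    by (simp add: pending_j_append n_def)
  then have "count_j i T (row_boxes (Suc a) [w..<?B]) \<le> pending_j_below i T ?B (Suc a)"
    using pending_j_lower_bound[of n i T "row_boxes (Suc a) [w..<?B]"]
      count_i_right_of_larger[OF pt \<open>1 \<le> i\<close> box larger] by simp
  then show ?thesis
    using left bounds(2) by (simp add: row_boxes_upt_Cons count_j_Cons)
qed

lemma ribbon_count_step_south:
  assumes pt: "primed_tableau k lam mu T" and "1 \<le> i" and primed: "T (Suc a, b) = pr (i + 1)"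
    and IH: "e + count_i i T (row_boxes (Suc a) [0..<b])
      + count_j i T (row_boxes (Suc (Suc a)) [Suc b..<bnd T]) \<le> pending_j_below i T (bnd T) (Suc (Suc a))"
  shows "e + count_i i T (row_boxes a [0..<b])
      + count_j i T (row_boxes (Suc a) [Suc b..<bnd T]) \<le> pending_j_below i T (bnd T) (Suc a)"
proof -
  let ?B = "bnd T"
  have box: "T (Suc a, b) \<noteq> 0" using primed by (simp add: pr_def)
  have bounds: "Suc a < ?B" "b < ?B" using primed_tableau_bnd[OF pt box] by auto
  have "pending_j_below i T ?B (Suc (Suc a)) + count_j i T (row_boxes (Suc a) [0..<?B])
      \<le> pending_j_below i T ?B (Suc a) + count_i i T (row_boxes (Suc a) [0..<?B])"
    using pending_j_lower_bound pending_j_below_Suc[OF bounds(1)] by metis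
  moreover have "count_i i T (row_boxes (Suc a) [0..<?B]) = count_i i T (row_boxes (Suc a) [0..<b])"
    using row_boxes_upt_split[of 0 b ?B] bounds(2)
      count_i_right_of_larger[OF pt \<open>1 \<le> i\<close> box, of ?B] primed
    by (simp add: count_i_append pr_def unpr_def)
  moreover have "count_j i T (row_boxes (Suc a) [Suc b..<?B]) \<le> count_j i T (row_boxes (Suc a) [0..<?B])"
    using row_boxes_upt_split[of 0 "Suc b" ?B] bounds(2) by (simp add: count_j_append)
  moreover have "count_i i T (row_boxes a [0..<b]) = 0"
    unfolding count_i_eq_0_iff row_boxes_def
  proof (intro ballI notI)
    fix p assume "p \<in> set (map (\<lambda>c. (a, c)) [0..<b])" "T p = unpr i"
    then obtain g where g: "g < b" "T (a, g) = unpr i" by auto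
    have g_box: "T (Suc a, g) \<noteq> 0" "unpr i < T (Suc a, g)"
      using entry_below_i_gt[OF pt \<open>1 \<le> i\<close> g(2) box] g(1) by auto
    have "T (Suc a, g) \<le> T (Suc a, b)" using primed_tableau_row_mono[OF pt g_box(1) box] g(1) by simp
    moreover have "T (Suc a, g) \<noteq> T (Suc a, b)"
      using primed_tableau_primed_row_unique[OF pt box, of g] primed g(1) by (simp add: pr_def)
    ultimately show False using g_box(2) primed by (simp add: pr_def unpr_def)
  qed
  ultimately show ?thesis using IH by linarith
qed

lemma ribbon_count_step_west:
  assumes "T (Suc a, b) = unpr (i + 1)" "0 < b" "b < B"
    and IH: "e + count_i i T (row_boxes a [0..<b - 1]) + count_j i T (row_boxes (Suc a) [b..<B]) \<le> N"
  shows "e + count_i i T (row_boxes a [0..<b]) + count_j i T (row_boxes (Suc a) [Suc b..<B]) \<le> N"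
proof -
  have "[0..<b] = [0..<b - 1] @ [b - 1]" using assms(2) by (cases b) auto
  then have "count_i i T (row_boxes a [0..<b]) \<le> count_i i T (row_boxes a [0..<b - 1]) + 1"
    using count_i_snoc_le[of i T "row_boxes a [0..<b - 1]" "(a, b - 1)"] by (simp add: row_boxes_def)
  moreover have "count_j i T (row_boxes (Suc a) [b..<B]) = 1 + count_j i T (row_boxes (Suc a) [Suc b..<B])"
    using assms(1,3) by (simp add: row_boxes_upt_Cons count_j_Cons)
  ultimately show ?thesis using IH by linarith
qed

lemma ribbon_count_invariant:
  assumes pt: "primed_tableau k lam mu T" and "1 \<le> i" and terminal: "\<forall>q'. (q, q') \<notin> rstep T i"
  shows "(p, q) \<in> (rstep T i)\<^sup>* \<Longrightarrow> ribbon_box T i p \<Longrightarrow> p = (Suc a, b) \<Longrightarrow>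
    (if T q = unpr (i + 1) then 1 else 0) + count_i i T (row_boxes a [0..<b])
      + count_j i T (row_boxes (Suc a) [Suc b..<bnd T]) \<le> pending_j_below i T (bnd T) (Suc a)"
proof (induction p arbitrary: a b rule: converse_rtrancl_induct)
  case base
  then show ?case using ribbon_count_end[OF pt \<open>1 \<le> i\<close>] terminal by blast
next
  case (step y z)
  have "ribbon_box T i z" using step.hyps(1) by (simp add: rstep_iff)
  show ?case
  proof (cases "T y = pr (i + 1)")
    case True
    with step.prems(2) have primed: "T (Suc a, b) = pr (i + 1)" by simp
    have "z = (Suc (Suc a), b)"
      using rstep_from_primed_south[OF pt primed] step.hyps(1) step.prems(2) by simp
    from step.IH[OF \<open>ribbon_box T i z\<close> this] show ?thesis
      by (rule ribbon_count_step_south[OF pt \<open>1 \<le> i\<close> primed])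
  next
    case False
    then have unprimed: "T (Suc a, b) = unpr (i + 1)"
      using step.prems by (simp add: ribbon_box_def)
    then have west: "0 < b" "z = (Suc a, b - 1)"
      using rstep_from_unprimed_west[OF pt unprimed] step.hyps(1) step.prems(2) by simp_all
    have "b < bnd T"
      using primed_tableau_bnd[OF pt ribbon_box_nonzero[OF step.prems(1)]] step.prems(2) by simp
    then show ?thesis
      using step.IH[OF \<open>ribbon_box T i z\<close> west(2)] west(1)
        ribbon_count_step_west[where T = T and a = a and b = b, OF unprimed west(1)] by simp
  qed
qed

lemma cval_ge_enat_iff: "cval T p \<ge> enat n \<longleftrightarrow> T p = 0 \<or> n \<le> T p"
  by (simp add: cval_def)

lemma cval_gt_enat_iff: "cval T p > enat n \<longleftrightarrow> T p = 0 \<or> n < T p"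
  by (simp add: cval_def)

lemma cval_eq_enat_iff: "n \<noteq> 0 \<Longrightarrow> cval T p = enat n \<longleftrightarrow> T p = n"
  by (simp add: cval_def)

lemma cval_in_enat_iff: "cval T p \<in> {enat a, enat b} \<longleftrightarrow> T p \<noteq> 0 \<and> (T p = a \<or> T p = b)"
  by (simp add: cval_def)

locale f_applicable =
  fixes k :: nat and lam mu :: "nat list" and T :: ptab and i r c :: nat
  assumes tableau: "primed_tableau k lam mu T"
    and i_pos: "1 \<le> i" and i_lt_k: "i < k"
    and unbracketed: "unbracketed_i i T \<noteq> []"
    and fx_eq: "fx i T = (r, c)"
begin

lemma x_entry: "T (r, c) = 2 * i"
proof -
  have "fx i T \<in> set (unbracketed_i i T)" using unbracketed by (simp add: fx_def)
  then show ?thesis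
    using unbr_i_subset unbracketed_i_rows_from[OF i_pos] fx_eq by (fastforce simp: unpr_def)
qed

lemma x_box: "T (r, c) \<noteq> 0"
  using x_entry i_pos by simp

lemma reading_split:
  "pending_j i T 0 (rows_from (bnd T) (Suc r) @ row_boxes r [0..<c]) = 0"
  "unbr_i i T 0 (row_boxes r [Suc c..<bnd T] @ concat (map (\<lambda>\<rho>. row_boxes \<rho> [0..<bnd T]) (rev [0..<r]))) = []"
proof -
  let ?B = "bnd T"
  define before where "before = rows_from ?B (Suc r) @ row_boxes r [0..<c]"
  define after where "after = row_boxes r [Suc c..<?B] @ concat (map (\<lambda>\<rho>. row_boxes \<rho> [0..<?B]) (rev [0..<r]))"
  have bounds: "r < ?B" "c < ?B" using primed_tableau_bnd[OF tableau x_box] by auto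
  have "rows_from ?B 0 = rows_from ?B (Suc r) @ row_boxes r [0..<?B] @ concat (map (\<lambda>\<rho>. row_boxes \<rho> [0..<?B]) (rev [0..<r]))"
    using upt_add_eq_append[of 0 r "?B - r"] bounds(1) by (simp add: rows_from_def upt_conv_Cons)
  then have split: "rows_from ?B 0 = before @ (r, c) # after"
    using row_boxes_upt_split[of 0 c ?B r] row_boxes_upt_Cons[OF bounds(2)] bounds(2)
    by (simp add: before_def after_def)
  have x_not_around: "(r, c) \<notin> set before" "(r, c) \<notin> set after"
    by (auto simp: before_def after_def rows_from_def row_boxes_def)
  have unbr: "unbracketed_i i T = unbr_i i T 0 before @ unbr_i i T (pending_j i T 0 before) ((r, c) # after)"
    by (simp add: unbracketed_i_rows_from[OF i_pos] split unbr_i_append)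
  have "(r, c) \<in> set (unbracketed_i i T)"
    using unbracketed fx_eq by (metis fx_def last_in_set)
  show pending: "pending_j i T 0 before = 0"
  proof (rule ccontr)
    assume "pending_j i T 0 before \<noteq> 0"
    then have "unbracketed_i i T = unbr_i i T 0 before @ unbr_i i T (pending_j i T 0 before - 1) after"
      using unbr x_entry by (simp add: unpr_def)
    then show False
      using \<open>(r, c) \<in> set (unbracketed_i i T)\<close> x_not_around unbr_i_subset by fastforce
  qed
  show "unbr_i i T 0 after = []"
  proof (rule ccontr)
    assume nonempty: "unbr_i i T 0 after \<noteq> []"
    have "unbracketed_i i T = unbr_i i T 0 before @ (r, c) # unbr_i i T 0 after"
      using unbr pending x_entry by (simp add: unpr_def)
    then have "(r, c) = last (unbr_i i T 0 after)"
      using fx_eq nonempty by (simp add: fx_def)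
    then show False using nonempty x_not_around unbr_i_subset last_in_set by fastforce
  qed
qed

lemma pending_j_below_x: "pending_j_below i T (bnd T) (Suc r) \<le> count_i i T (row_boxes r [0..<c])"
  using reading_split(1) pending_j_lower_bound[of "pending_j_below i T (bnd T) (Suc r)" i T "row_boxes r [0..<c]"]
  by (simp add: pending_j_below_def pending_j_append)

lemma east_ne_i: "T (r, Suc c) \<noteq> 2 * i"
proof
  assume east: "T (r, Suc c) = 2 * i"
  then have "Suc c < bnd T" using primed_tableau_bnd[OF tableau, of "(r, Suc c)"] i_pos by simp
  then have "unbr_i i T 0 (row_boxes r [Suc c..<bnd T] @ concat (map (\<lambda>\<rho>. row_boxes \<rho> [0..<bnd T]) (rev [0..<r]))) \<noteq> []"
    using east by (simp add: row_boxes_upt_Cons unpr_def)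
  then show False using reading_split(2) by simp
qed

lemma left_le: "T (r, c') \<noteq> 0 \<Longrightarrow> c' < c \<Longrightarrow> T (r, c') \<le> 2 * i"
  using primed_tableau_row_mono[OF tableau _ x_box] x_entry by fastforce

lemma above_lt: "T (r', c) \<noteq> 0 \<Longrightarrow> r' < r \<Longrightarrow> T (r', c) < 2 * i"
  using primed_tableau_col_mono[OF tableau _ x_box, of r'] primed_tableau_unprimed_col_unique[OF tableau x_box, of r']
    x_entry by fastforce

lemma east_cases: "T (r, Suc c) = 0 \<or> T (r, Suc c) = 2 * i + 1 \<or> 2 * i + 2 \<le> T (r, Suc c)"
  using primed_tableau_row_mono[OF tableau x_box, of "Suc c"] x_entry east_ne_i by fastforce

lemma east_le_right: "T (r, c') \<noteq> 0 \<Longrightarrow> Suc c < c' \<Longrightarrow> T (r, Suc c) \<noteq> 0 \<and> T (r, Suc c) \<le> T (r, c')"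
  using primed_tableau_box_between[OF tableau x_box, of r c' r "Suc c"]
    primed_tableau_row_mono[OF tableau, of r "Suc c" c'] by simp

lemma south_cases: "T (Suc r, c) = 0 \<or> 2 * i + 1 \<le> T (Suc r, c)"
  using primed_tableau_col_mono[OF tableau x_box, of "Suc r"]
    primed_tableau_unprimed_col_unique[OF tableau x_box, of "Suc r"] x_entry by fastforce

lemma south_le_below: "T (r', c) \<noteq> 0 \<Longrightarrow> Suc r < r' \<Longrightarrow> T (Suc r, c) \<noteq> 0 \<and> T (Suc r, c) \<le> T (r', c)"
  using primed_tableau_box_between[OF tableau x_box, of r' c "Suc r" c]
    primed_tableau_col_mono[OF tableau, of "Suc r" c r'] by simp

lemma below_ge: "T (r', c) \<noteq> 0 \<Longrightarrow> r < r' \<Longrightarrow> 2 * i + 1 \<le> T (r', c)"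
  using south_cases south_le_below[of r'] by (cases "r' = Suc r") fastforce+

lemma ribbon_below_x:
  assumes "ribbon_box T i (Suc r, c)" "((Suc r, c), q) \<in> (rstep T i)\<^sup>*" "\<forall>q'. (q, q') \<notin> rstep T i"
  shows "T q \<noteq> unpr (i + 1)" "count_j i T (row_boxes (Suc r) [Suc c..<bnd T]) = 0"
  using ribbon_count_invariant[OF tableau i_pos assms(3) assms(2,1)] pending_j_below_x
  by (auto split: if_splits)

lemma southeast_ne_j: "T (Suc r, Suc c) \<noteq> 2 * i + 2"
proof
  assume southeast: "T (Suc r, Suc c) = 2 * i + 2"
  then have "T (Suc r, c) \<noteq> 0"
    using primed_tableau_box_between[OF tableau x_box, of "Suc r" "Suc c" "Suc r" c] by simp
  moreover have "T (Suc r, c) \<le> T (Suc r, Suc c)"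
    using calculation primed_tableau_row_mono[OF tableau, of "Suc r" c "Suc c"] southeast by simp
  ultimately have "ribbon_box T i (Suc r, c)"
    using south_cases southeast by (auto simp: ribbon_box_def pr_def unpr_def)
  moreover obtain q where "((Suc r, c), q) \<in> (rstep T i)\<^sup>*" "\<forall>q'. (q, q') \<notin> rstep T i"
    using ribbon_terminal_exists[OF tableau] by blast
  ultimately have "count_j i T (row_boxes (Suc r) [Suc c..<bnd T]) = 0"
    by (rule ribbon_below_x(2))
  moreover have "Suc c < bnd T" using primed_tableau_bnd[OF tableau, of "(Suc r, Suc c)"] southeast by simp
  ultimately show False using southeast by (simp add: row_boxes_upt_Cons count_j_Cons unpr_def)
qed

lemma fq_eq:
  "fq i T =
    (if (T (r, Suc c) = 0 \<or> 2 * i + 2 \<le> T (r, Suc c)) \<and> (T (Suc r, c) = 0 \<or> 2 * i + 2 < T (Suc r, c)) then (r, c)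
     else if T (r, Suc c) = 2 * i + 1 then (r, Suc c)
     else if (T (r, Suc c) = 0 \<or> 2 * i + 2 \<le> T (r, Suc c)) \<and> T (Suc r, c) \<noteq> 0
        \<and> (T (Suc r, c) = 2 * i + 1 \<or> T (Suc r, c) = 2 * i + 2) then ribbon_end T i (Suc r, c)
     else undefined)"
  unfolding fq_def Let_def fx_eq
  by (simp add: cval_ge_enat_iff cval_gt_enat_iff cval_eq_enat_iff cval_in_enat_iff unpr_def pr_def)

lemma f_op_eq: "f_op i T = Some (T((r, c) := 2 * i + 1, fq i T := (T((r, c) := 2 * i + 1)) (fq i T) + 1))"
  using unbracketed x_entry by (simp add: f_op_def fx_eq Let_def)

lemma j_le_k: "2 * i + 2 \<le> 2 * k"
  using i_lt_k by simp

lemma right_ge_j: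
  assumes "T (r, Suc c) = 0 \<or> 2 * i + 2 \<le> T (r, Suc c)" "T (r, c') \<noteq> 0" "c < c'"
  shows "2 * i + 2 \<le> T (r, c')"
  using assms east_le_right[of c'] by (cases "c' = Suc c") fastforce+

lemma tableau_F1:
  assumes east: "T (r, Suc c) = 0 \<or> 2 * i + 2 \<le> T (r, Suc c)"
    and south: "T (Suc r, c) = 0 \<or> 2 * i + 2 < T (Suc r, c)"
  shows "primed_tableau k lam mu (T((r, c) := 2 * i + 2))"
proof -
  have below: "2 * i + 2 < T (r', c)" if "T (r', c) \<noteq> 0" "r < r'" for r'
    using that south south_le_below[of r'] by (cases "r' = Suc r") fastforce+
  show ?thesis
  proof (rule primed_tableau_fun_upd[OF tableau x_box _ j_le_k])
    show "T (r', c) \<noteq> 2 * i + 2" if "r' \<noteq> r" "T (r', c) \<noteq> 0" for r'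
      using that below[of r'] above_lt[of r'] by (cases "r' < r") auto
  qed (use left_le above_lt below right_ge_j[OF east] in fastforce)+
qed

lemma east_right_ge_j:
  assumes "T (r, Suc c) = 2 * i + 1" "T (r, c') \<noteq> 0" "Suc c < c'"
  shows "2 * i + 2 \<le> T (r, c')"
proof -
  have "T (r, Suc c) \<le> T (r, c')"
    using primed_tableau_row_mono[OF tableau, of r "Suc c" c'] assms by simp
  moreover have "T (r, c') \<noteq> T (r, Suc c)"
    using primed_tableau_primed_row_unique[OF tableau _ _, of r "Suc c" c'] assms by simp
  ultimately show ?thesis using assms(1) by simp
qed

lemma east_below_gt_j:
  assumes east: "T (r, Suc c) = 2 * i + 1" and "T (r', Suc c) \<noteq> 0" "r < r'"
  shows "2 * i + 2 < T (r', Suc c)"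
proof -
  have east_box: "T (r, Suc c) \<noteq> 0" using east by simp
  have southeast_box: "T (Suc r, Suc c) \<noteq> 0"
    using primed_tableau_box_between[OF tableau east_box assms(2), of "Suc r" "Suc c"] assms(3) by simp
  have south_box: "T (Suc r, c) \<noteq> 0"
    using primed_tableau_box_between[OF tableau x_box southeast_box, of "Suc r" c] by simp
  have "T (r, Suc c) \<le> T (Suc r, Suc c)"
    using primed_tableau_col_mono[OF tableau east_box southeast_box] by simp
  moreover have "T (Suc r, Suc c) \<noteq> 2 * i + 1"
  proof
    assume southeast: "T (Suc r, Suc c) = 2 * i + 1"
    then have "T (Suc r, c) = 2 * i + 1"
      using primed_tableau_row_mono[OF tableau south_box southeast_box] south_cases south_box by simp
    then show False
      using primed_tableau_primed_row_unique[OF tableau south_box, of "Suc c"] southeast by simp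
  qed
  moreover have "T (Suc r, Suc c) \<le> T (r', Suc c)"
    using primed_tableau_col_mono[OF tableau southeast_box assms(2)] assms(3) by simp
  ultimately show ?thesis using southeast_ne_j east by simp
qed

lemma tableau_F2_east:
  assumes east: "T (r, Suc c) = 2 * i + 1"
  shows "primed_tableau k lam mu (T((r, Suc c) := 2 * i + 2))"
proof -
  have east_box: "T (r, Suc c) \<noteq> 0" using east by simp
  show ?thesis
  proof (rule primed_tableau_fun_upd[OF tableau east_box _ j_le_k])
    show "T (r', Suc c) \<noteq> 2 * i + 2" if "r' \<noteq> r" "T (r', Suc c) \<noteq> 0" for r'
      using that east_below_gt_j[OF east, of r'] primed_tableau_col_mono[OF tableau _ east_box, of r']
        east by (cases "r' < r") auto
  qed (use east east_right_ge_j[OF east] east_below_gt_j[OF east]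
         primed_tableau_row_mono[OF tableau _ east_box] primed_tableau_col_mono[OF tableau _ east_box]
       in fastforce)+
qed

lemma tableau_F2:
  assumes east: "T (r, Suc c) = 2 * i + 1"
  shows "primed_tableau k lam mu (T((r, Suc c) := 2 * i + 2, (r, c) := 2 * i + 1))"
proof (rule primed_tableau_fun_upd[OF tableau_F2_east[OF east]])
  let ?T = "T((r, Suc c) := 2 * i + 2)"
  show "?T (r, c) \<noteq> 0" "2 * i + 1 \<noteq> 0" "2 * i + 1 \<le> 2 * k"
    using x_box j_le_k by simp_all
  show "?T (r, c') \<le> 2 * i + 1" if "?T (r, c') \<noteq> 0" "c' < c" for c'
    using that left_le[of c'] by simp
  show "2 * i + 1 \<le> ?T (r, c')" if "?T (r, c') \<noteq> 0" "c < c'" for c'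
    using that east_right_ge_j[OF east, of c'] by (cases "c' = Suc c") auto
  show "?T (r', c) \<le> 2 * i + 1" if "?T (r', c) \<noteq> 0" "r' < r" for r'
    using that above_lt[of r'] by simp
  show "2 * i + 1 \<le> ?T (r', c)" if "?T (r', c) \<noteq> 0" "r < r'" for r'
    using that below_ge[of r'] by simp
  show "?T (r, c') \<noteq> 2 * i + 1" if "c' \<noteq> c" "?T (r, c') \<noteq> 0" for c'
    using that left_le[of c'] east_right_ge_j[OF east, of c']
    by (cases "c' < c"; cases "c' = Suc c") auto
qed simp

lemma tableau_F3_x:
  assumes east: "T (r, Suc c) = 0 \<or> 2 * i + 2 \<le> T (r, Suc c)"
  shows "primed_tableau k lam mu (T((r, c) := 2 * i + 1))"
proof (rule primed_tableau_fun_upd[OF tableau x_box])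
  show "T (r, c') \<noteq> 2 * i + 1" if "c' \<noteq> c" "T (r, c') \<noteq> 0" for c'
    using that left_le[of c'] right_ge_j[OF east, of c'] by (cases "c' < c") auto
qed (use j_le_k left_le above_lt below_ge right_ge_j[OF east] in fastforce)+

lemma tableau_F3:
  assumes east: "T (r, Suc c) = 0 \<or> 2 * i + 2 \<le> T (r, Suc c)"
    and ribbon: "((Suc r, c), (a, w)) \<in> (rstep T i)\<^sup>*" and terminal: "\<forall>q'. ((a, w), q') \<notin> rstep T i"
    and end_primed: "T (a, w) = 2 * i + 1"
  shows "primed_tableau k lam mu (T((r, c) := 2 * i + 1, (a, w) := 2 * i + 2))"
proof -
  let ?T = "T((r, c) := 2 * i + 1)"
  have "r < a" using rstep_rtrancl_row_mono[OF ribbon] by simp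
  have q_box: "T (a, w) \<noteq> 0" using end_primed by simp
  have below: "2 * i + 2 < T (r', w)" if "T (r', w) \<noteq> 0" "a < r'" for r'
  proof -
    have south_box: "T (Suc a, w) \<noteq> 0"
      using primed_tableau_box_between[OF tableau q_box that(1), of "Suc a" w] that(2) by simp
    have "T (a, w) \<le> T (Suc a, w)" using primed_tableau_col_mono[OF tableau q_box south_box] by simp
    moreover have "\<not> ribbon_box T i (Suc a, w)" using terminal by (auto simp: rstep_iff)
    moreover have "T (Suc a, w) \<le> T (r', w)"
      using primed_tableau_col_mono[OF tableau south_box that(1)] that(2) by simp
    ultimately show ?thesis using end_primed by (auto simp: ribbon_box_def pr_def unpr_def)
  qed
  have above: "?T (r', w) \<le> 2 * i + 1" if "?T (r', w) \<noteq> 0" "r' < a" for r'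
    using that primed_tableau_col_mono[OF tableau _ q_box, of r'] end_primed
    by (cases "(r', w) = (r, c)") auto
  show ?thesis
  proof (rule primed_tableau_fun_upd[OF tableau_F3_x[OF east]])
    show "?T (a, c') \<le> 2 * i + 2" if "?T (a, c') \<noteq> 0" "c' < w" for c'
      using that primed_tableau_row_mono[OF tableau _ q_box, of c'] end_primed \<open>r < a\<close> by simp
    show "2 * i + 2 \<le> ?T (a, c')" if "?T (a, c') \<noteq> 0" "w < c'" for c'
      using that primed_tableau_row_mono[OF tableau q_box, of c']
        primed_tableau_primed_row_unique[OF tableau q_box, of c'] end_primed \<open>r < a\<close> by fastforce
    show "?T (r', w) \<le> 2 * i + 2" if "?T (r', w) \<noteq> 0" "r' < a" for r'
      using above[OF that] by simp
    show "2 * i + 2 \<le> ?T (r', w)" if "?T (r', w) \<noteq> 0" "a < r'" for r'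
      using that below[of r'] \<open>r < a\<close> by simp
    show "?T (r', w) \<noteq> 2 * i + 2" if "r' \<noteq> a" "?T (r', w) \<noteq> 0" for r'
      using that above[of r'] below[of r'] \<open>r < a\<close> by (cases "r' < a") auto
  qed (use q_box \<open>r < a\<close> j_le_k in auto)
qed

lemma f_op_shape:
  "((fq i T = (r, c) \<and> T (r, c) = unpr i \<and> f_op i T = Some (T((r, c) := unpr (i + 1))))
   \<or> (fq i T \<noteq> (r, c) \<and> T (r, c) = unpr i \<and> T (fq i T) = pr (i + 1) \<and>
       f_op i T = Some (T((r, c) := pr (i + 1), fq i T := unpr (i + 1)))))
   \<and> primed_tableau k lam mu (the (f_op i T))"
proof -
  consider (F1) "T (r, Suc c) = 0 \<or> 2 * i + 2 \<le> T (r, Suc c)" "T (Suc r, c) = 0 \<or> 2 * i + 2 < T (Suc r, c)"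
    | (F2) "T (r, Suc c) = 2 * i + 1"
    | (F3) "T (r, Suc c) = 0 \<or> 2 * i + 2 \<le> T (r, Suc c)" "T (Suc r, c) = 2 * i + 1 \<or> T (Suc r, c) = 2 * i + 2"
    using east_cases south_cases by fastforce
  then show ?thesis
  proof cases
    case F1
    then have "fq i T = (r, c)" by (simp add: fq_eq)
    with F1 show ?thesis using f_op_eq tableau_F1 x_entry by (simp add: unpr_def pr_def)
  next
    case F2
    then have "fq i T = (r, Suc c)" by (simp add: fq_eq)
    with F2 show ?thesis using f_op_eq tableau_F2 x_entry by (simp add: unpr_def pr_def fun_upd_twist)
  next
    case F3
    then have "ribbon_box T i (Suc r, c)" by (auto simp: ribbon_box_def unpr_def pr_def)
    obtain a w where ribbon: "((Suc r, c), (a, w)) \<in> (rstep T i)\<^sup>*" and terminal: "\<forall>q'. ((a, w), q') \<notin> rstep T i"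
      using ribbon_terminal_exists[OF tableau] by (metis surj_pair)
    have "fq i T = (a, w)"
      using F3 fq_eq ribbon_end_eq[OF tableau \<open>ribbon_box T i (Suc r, c)\<close> ribbon terminal] by auto
    moreover have "T (a, w) = 2 * i + 1"
      using ribbon_below_x(1)[OF \<open>ribbon_box T i (Suc r, c)\<close> ribbon terminal]
        rstep_rtrancl_ribbon_box[OF ribbon \<open>ribbon_box T i (Suc r, c)\<close>] by (auto simp: ribbon_box_def unpr_def pr_def)
    moreover have "(a, w) \<noteq> (r, c)" using rstep_rtrancl_row_mono[OF ribbon] by auto
    ultimately show ?thesis
      using f_op_eq tableau_F3[OF F3(1) ribbon terminal] x_entry by (auto simp: unpr_def pr_def)
  qed
qed

end

theorem lemma3p2:
  fixes k i :: nat and lam mu :: "nat list" and T :: ptab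
  assumes "primed_tableau k lam mu T"
    and "1 \<le> i" and "i \<le> k - 1"
    and "f_op i T \<noteq> None"
  shows "((fq i T = fx i T \<and> T (fx i T) = unpr i \<and>
            f_op i T = Some (T(fx i T := unpr (i + 1))))
       \<or> (fq i T \<noteq> fx i T \<and> T (fx i T) = unpr i \<and> T (fq i T) = pr (i + 1) \<and>
            f_op i T = Some (T(fx i T := pr (i + 1), fq i T := unpr (i + 1)))))
       \<and> primed_tableau k lam mu (the (f_op i T))"
proof -
  obtain r c where x: "fx i T = (r, c)" by fastforce
  have "unbracketed_i i T \<noteq> []" using assms(4) by (auto simp: f_op_def)
  then interpret f_applicable k lam mu T i r c
    using assms x by unfold_locales auto
  show ?thesis using f_op_shape x by simp
qed

end
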